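(* Let $d:\mathbb{R}\to\mathbb{R}$ be a derivation and $\alpha>0$. Then the function $F_{d,\alpha}:\mathbb{R}_+\to\mathbb{R}_+$ defined by \[ F_{d,\alpha}(x)=x^\alpha\exp\Big(\frac{d(x)}{x}\Big)\qquad(x\in\mathbb{R}_+) \] is multiplicative and $(p,\alpha^{-1}p)$-Jensen convex for every positive rational $p$, i.e. \[ F_{d,\alpha}\big(H_p(x,y)\big)\le H_{p/\alpha}\big(F_{d,\alpha}(x),F_{d,\alpha}(y)\big)\qquad(x,y>0,\ p\in\mathbb{Q},\ p>0). \] Hence, if $d$ is a nonzero derivation, then $F_{d,\alpha}$ is a discontinuous function on $\mathbb{R}_+$ which is $(p,\alpha^{-1}p)$-Jensen convex for all positive rationals $p$.
   Context: $\mathbb{R}_+=]0,\infty[$. For $p\in\mathbb{R}$, $H_p(x,y)=\left(\frac{x^p+y^p}{2}\right)^{1/p}$ if $p\neq0$ and $H_0(x,y)=\sqrt{xy}$ ($x,y>0$). A derivation is a function $d:\mathbb{R}\to\mathbb{R}$ that is additive ($d(x+y)=d(x)+d(y)$) and satisfies $d(xy)=xd(y)+yd(x)$ for all $x,y\in\mathbb{R}$. A function $m:\mathbb{R}_+\to\mathbb{R}_+$ is multiplicative if $m(xy)=m(x)m(y)$ for all $x,y>0$. *)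

theory Defs
  imports "HOL-Analysis.Analysis"
begin

definition derivation :: "(real \<Rightarrow> real) \<Rightarrow> bool" where
  "derivation d \<longleftrightarrow> (\<forall>x y. d (x + y) = d x + d y) \<and> (\<forall>x y. d (x * y) = x * d y + y * d x)"

definition H :: "real \<Rightarrow> real \<Rightarrow> real \<Rightarrow> real" where
  "H p x y = (if p = 0 then sqrt (x * y) else ((x powr p + y powr p) / 2) powr (1 / p))"

definition multiplicative_pos :: "(real \<Rightarrow> real) \<Rightarrow> bool" where
  "multiplicative_pos m \<longleftrightarrow> (\<forall>x>0. m x > 0) \<and> (\<forall>x>0. \<forall>y>0. m (x * y) = m x * m y)"

definition F :: "(real \<Rightarrow> real) \<Rightarrow> real \<Rightarrow> real \<Rightarrow> real" where
  "F d \<alpha> x = x powr \<alpha> * exp (d x / x)"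

end

theory Submission
  imports Defs
begin

text \<open>A derivation vanishes on the rationals, so L x = d x / x is a logarithm on the positive
  reals with L (x powr q) = q * L x for rational q; hence F x = x powr \<alpha> * exp (L x) is
  multiplicative. With u = x powr p and v = y powr p, the p/\<alpha>-th power of F (H p x y) is
  (u + v)/2 times exp of the u,v-weighted mean of p/\<alpha> * L x and p/\<alpha> * L y, while that of the
  right-hand side is the corresponding weighted mean of the exponentials: the inequality is the
  convexity of exp. Finally F q = q powr \<alpha> for rational q, so a continuous F would equal
  x powr \<alpha> everywhere, forcing d = 0 on the positive reals and thus everywhere.\<close>

lemma eq_on_Rats_imp_eq:
  fixes f g :: "real \<Rightarrow> real"
  assumes "open U" "continuous_on U f" "continuous_on U g"
    and "\<And>q. q \<in> U \<inter> \<rat> \<Longrightarrow> f q = g q" and "x \<in> U"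
  shows "f x = g x"
proof -
  have "continuous_on U (\<lambda>z. f z - g z)"
    using assms by (intro continuous_intros)
  then have "closedin (top_of_set U) {z \<in> U. f z - g z = 0}"
    by (rule continuous_closedin_preimage_constant)
  then obtain C where "closed C" and C: "{z \<in> U. f z - g z = 0} = U \<inter> C"
    unfolding closedin_closed by blast
  have "U \<subseteq> closure (U \<inter> \<rat>)"
    using open_Int_closure_subset[OF assms(1), of \<rat>] by (simp add: Rats_closure_real)
  also have "\<dots> \<subseteq> C"
  proof (rule closure_minimal[OF _ \<open>closed C\<close>])
    show "U \<inter> \<rat> \<subseteq> C" using C assms(4) by fastforce
  qed
  finally have "x \<in> U \<inter> C"
    using assms(5) by blast
  then show ?thesis
    unfolding C[symmetric] by simp
qed

lemma exp_weighted_mean_le: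
  fixes s t a b :: real
  assumes "s > 0" "t > 0"
  shows "(s + t) * exp ((s * a + t * b) / (s + t)) \<le> s * exp a + t * exp b"
proof -
  define w where "w = t / (s + t)"
  have w: "0 \<le> w" "w \<le> 1" "1 - w = s / (s + t)"
    using assms by (auto simp: w_def field_simps)
  have "exp ((s * a + t * b) / (s + t)) = exp ((1 - w) * a + w * b)"
    unfolding w(3) by (simp add: w_def add_divide_distrib)
  also have "\<dots> \<le> (1 - w) * exp a + w * exp b"
    using convex_onD[OF exp_convex, of w a b] w by simp
  also have "\<dots> = (s * exp a + t * exp b) / (s + t)"
    unfolding w(3) by (simp add: w_def add_divide_distrib)
  finally show ?thesis
    using assms by (simp add: field_simps)
qed

definition log_derivative :: "(real \<Rightarrow> real) \<Rightarrow> real \<Rightarrow> real" where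
  "log_derivative d x = d x / x"

context
  fixes d :: "real \<Rightarrow> real"
  assumes d: "derivation d"
begin

lemma derivation_add: "d (x + y) = d x + d y"
  using d by (simp add: derivation_def)

lemma derivation_mult: "d (x * y) = x * d y + y * d x"
  using d by (simp add: derivation_def)

lemma derivation_zero: "d 0 = 0"
  using derivation_add[of 0 0] by simp

lemma derivation_uminus: "d (- x) = - d x"
  using derivation_add[of x "- x"] derivation_zero by simp

lemma derivation_one: "d 1 = 0"
  using derivation_mult[of 1 1] by simp

lemma derivation_of_nat: "d (of_nat n) = 0"
  by (induction n) (simp_all add: derivation_zero derivation_add derivation_one)

lemma derivation_of_int: "d (of_int m) = 0"
proof (cases "m \<ge> 0")
  case True
  then show ?thesis using derivation_of_nat[of "nat m"] by simp
next
  case False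
  then have "d (of_int m) = d (- of_nat (nat (- m)))" by simp
  then show ?thesis using derivation_uminus derivation_of_nat by simp
qed

lemma derivation_Rats:
  assumes "q \<in> \<rat>"
  shows "d q = 0"
proof -
  obtain a b where b: "b > 0" and q: "q = of_int a / of_int b"
    using Rats_cases'[OF assms] by metis
  have "real_of_int b * d q = d (of_int b * q)"
    using derivation_mult[of "of_int b" q] derivation_of_int[of b] by simp
  also have "\<dots> = 0"
    using b q derivation_of_int[of a] by simp
  finally show ?thesis using b by simp
qed

lemma derivation_eq_0_if_pos_eq_0:
  assumes "\<And>x. x > 0 \<Longrightarrow> d x = 0"
  shows "d = (\<lambda>_. 0)"
proof
  fix x :: real
  consider "x > 0" | "x = 0" | "- x > 0" by linarith
  then show "d x = 0"
    using assms derivation_zero derivation_uminus[of x] by cases auto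
qed

lemma log_derivative_mult:
  "x \<noteq> 0 \<Longrightarrow> y \<noteq> 0 \<Longrightarrow> log_derivative d (x * y) = log_derivative d x + log_derivative d y"
  by (simp add: log_derivative_def derivation_mult field_simps)

lemma log_derivative_Rats: "q \<in> \<rat> \<Longrightarrow> log_derivative d q = 0"
  by (simp add: log_derivative_def derivation_Rats)

lemma log_derivative_power:
  assumes "x \<noteq> 0"
  shows "log_derivative d (x ^ n) = n * log_derivative d x"
proof (induction n)
  case 0
  show ?case by (simp add: log_derivative_Rats)
next
  case (Suc n)
  then show ?case
    using assms log_derivative_mult[of x "x ^ n"] by (simp add: algebra_simps)
qed

lemma log_derivative_inverse:
  "x \<noteq> 0 \<Longrightarrow> log_derivative d (inverse x) = - log_derivative d x"
  using log_derivative_mult[of x "inverse x"] by (simp add: log_derivative_Rats)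

lemma log_derivative_powr_of_int:
  assumes "x > 0"
  shows "log_derivative d (x powr of_int m) = of_int m * log_derivative d x"
proof (cases "m \<ge> 0")
  case True
  then have "x powr of_int m = x ^ nat m"
    using assms by (simp add: powr_realpow[symmetric])
  then show ?thesis using True assms log_derivative_power[of x "nat m"] by simp
next
  case False
  then have "x powr of_int m = inverse (x ^ nat (- m))"
    using assms by (simp add: powr_realpow[symmetric] powr_minus[symmetric])
  then show ?thesis
    using False assms log_derivative_power[of x "nat (- m)"]
      log_derivative_inverse[of "x ^ nat (- m)"] by simp
qed

lemma log_derivative_powr_Rats:
  assumes "x > 0" and "p \<in> \<rat>"
  shows "log_derivative d (x powr p) = p * log_derivative d x"
proof -
  obtain a b where b: "b > 0" and p: "p = of_int a / of_int b"
    using Rats_cases'[OF assms(2)] by metis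
  have "(x powr p) ^ nat b = x powr of_int a"
    using assms(1) b by (simp add: powr_realpow[symmetric] powr_powr p)
  then have "of_int b * log_derivative d (x powr p) = of_int a * log_derivative d x"
    using assms(1) b log_derivative_power[of "x powr p" "nat b"] log_derivative_powr_of_int
    by simp
  then show ?thesis using b by (simp add: p field_simps)
qed

lemma log_derivative_power_mean:
  assumes "p \<in> \<rat>" "p \<noteq> 0" "x > 0" "y > 0"
  shows "log_derivative d (H p x y) =
    (x powr p * log_derivative d x + y powr p * log_derivative d y) / (x powr p + y powr p)"
proof -
  define S where "S = x powr p + y powr p"
  have S: "S > 0" using assms by (simp add: S_def add_pos_pos)
  have dS: "d S = p * (x powr p * log_derivative d x + y powr p * log_derivative d y)"
    using assms log_derivative_powr_Rats[of x p] log_derivative_powr_Rats[of y p]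
    by (simp add: S_def derivation_add log_derivative_def field_simps)
  have "log_derivative d (H p x y) = log_derivative d ((S / 2) powr (1 / p))"
    using assms by (simp add: H_def S_def)
  also have "\<dots> = log_derivative d (S / 2) / p"
    using S assms by (simp add: log_derivative_powr_Rats)
  also have "log_derivative d (S / 2) = log_derivative d S"
    using S log_derivative_mult[of S "1 / 2"] by (simp add: log_derivative_Rats)
  finally show ?thesis
    using assms S dS by (simp add: log_derivative_def S_def)
qed

lemma F_eq_log_derivative: "F d \<alpha> x = x powr \<alpha> * exp (log_derivative d x)"
  by (simp add: F_def log_derivative_def)

lemma multiplicative_pos_F: "multiplicative_pos (F d \<alpha>)"
  unfolding multiplicative_pos_def
proof (intro conjI allI impI)
  fix x y :: real
  assume "x > 0" "y > 0"
  then show "F d \<alpha> (x * y) = F d \<alpha> x * F d \<alpha> y"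
    by (simp add: F_eq_log_derivative log_derivative_mult powr_mult exp_add)
qed (simp add: F_def)

lemma F_powr:
  assumes "x > 0" "\<alpha> \<noteq> 0"
  shows "F d \<alpha> x powr (p / \<alpha>) = x powr p * exp (p / \<alpha> * log_derivative d x)"
  using assms by (simp add: F_eq_log_derivative powr_mult exp_powr_real powr_powr mult_ac)

lemma F_power_mean_le:
  assumes "p \<in> \<rat>" "p > 0" "\<alpha> > 0" "x > 0" "y > 0"
  shows "F d \<alpha> (H p x y) \<le> H (p / \<alpha>) (F d \<alpha> x) (F d \<alpha> y)"
proof -
  define u where "u = x powr p"
  define v where "v = y powr p"
  define a where "a = p / \<alpha> * log_derivative d x"
  define b where "b = p / \<alpha> * log_derivative d y"
  have uv: "u > 0" "v > 0" using assms by (simp_all add: u_def v_def)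
  have H: "H p x y = ((u + v) / 2) powr (1 / p)"
    using assms by (simp add: H_def u_def v_def)
  have Hpos: "H p x y > 0" using uv by (simp add: H)
  have "F d \<alpha> (H p x y) = (F d \<alpha> (H p x y) powr (p / \<alpha>)) powr (\<alpha> / p)"
    using assms by (simp add: F_eq_log_derivative powr_powr)
  also have "F d \<alpha> (H p x y) powr (p / \<alpha>)
      = H p x y powr p * exp (p / \<alpha> * log_derivative d (H p x y))"
    using Hpos assms by (simp add: F_powr)
  also have "p / \<alpha> * log_derivative d (H p x y) = (u * a + v * b) / (u + v)"
    using assms by (simp add: log_derivative_power_mean u_def v_def a_def b_def field_simps)
  also have "H p x y powr p = (u + v) / 2"
    using assms uv by (simp add: H powr_powr)
  also have "((u + v) / 2 * exp ((u * a + v * b) / (u + v))) powr (\<alpha> / p)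
      \<le> ((u * exp a + v * exp b) / 2) powr (\<alpha> / p)"
    using exp_weighted_mean_le[OF uv, of a b] uv assms by (intro powr_mono2) auto
  also have "\<dots> = H (p / \<alpha>) (F d \<alpha> x) (F d \<alpha> y)"
    using assms by (simp add: H_def F_powr u_def v_def a_def b_def)
  finally show ?thesis .
qed

lemma F_Rats: "q \<in> \<rat> \<Longrightarrow> F d \<alpha> q = q powr \<alpha>"
  by (simp add: F_def derivation_Rats)

lemma not_continuous_on_F:
  assumes "d \<noteq> (\<lambda>_. 0)"
  shows "\<not> continuous_on {0<..} (F d \<alpha>)"
proof
  assume cont: "continuous_on {0<..} (F d \<alpha>)"
  have pow: "continuous_on {0<..} (\<lambda>x::real. x powr \<alpha>)"
    by (intro continuous_on_powr' continuous_on_id continuous_on_const) auto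
  have "F d \<alpha> x = x powr \<alpha>" if "x > 0" for x
  proof (rule eq_on_Rats_imp_eq[OF open_greaterThan cont pow])
    show "F d \<alpha> q = q powr \<alpha>" if "q \<in> {0<..} \<inter> \<rat>" for q
      using that by (simp add: F_Rats)
  qed (use that in simp)
  then have "d x = 0" if "x > 0" for x
    using that by (simp add: F_def)
  then show False
    using assms derivation_eq_0_if_pos_eq_0 by blast
qed

end

theorem theorem3:
  fixes d :: "real \<Rightarrow> real" and \<alpha> :: real
  assumes "derivation d" and "\<alpha> > 0"
  shows "multiplicative_pos (F d \<alpha>)
    \<and> (\<forall>p\<in>\<rat>. p > 0 \<longrightarrow> (\<forall>x>0. \<forall>y>0.
          F d \<alpha> (H p x y) \<le> H (p / \<alpha>) (F d \<alpha> x) (F d \<alpha> y)))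
    \<and> (d \<noteq> (\<lambda>_. 0) \<longrightarrow> \<not> continuous_on {0<..} (F d \<alpha>))"
proof (intro conjI ballI impI allI)
  show "multiplicative_pos (F d \<alpha>)"
    using assms(1) by (rule multiplicative_pos_F)
  show "F d \<alpha> (H p x y) \<le> H (p / \<alpha>) (F d \<alpha> x) (F d \<alpha> y)"
    if "p \<in> \<rat>" "p > 0" "x > 0" "y > 0" for p x y
    using assms that by (intro F_power_mean_le)
  show "\<not> continuous_on {0<..} (F d \<alpha>)" if "d \<noteq> (\<lambda>_. 0)"
    using assms(1) that by (rule not_continuous_on_F)
qed

end
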